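(* Let $i,j,h,k\in\{1,2,3\}$ with $i<j$, $h<k$. (1) If $Q\in R$ does not depend on $x_{ij}$, then there exists $\widetilde Q\in R$ not depending on $x_{ij}$ such that $D_4\widetilde Q=Q$. (2) If $Q\in R$ depends neither on $x_{ij}$ nor on $x_{hk}$, then there exists $\widetilde Q\in R$ depending neither on $x_{ij}$ nor on $x_{hk}$ such that $D_4\widetilde Q=Q$.
   Context: $R=\mathrm{Sym}(\mathbb C^4)\otimes\mathrm{Sym}(\Lambda^2\mathbb C^4)$ is identified with the polynomial ring $\mathbb C[x_1,x_2,x_3,x_4,x_{12},x_{13},x_{14},x_{23},x_{24},x_{34}]$, $\partial_i=\partial/\partial x_i$, $\partial_{ij}=\partial/\partial x_{ij}$, and $D_4=\partial_{12}\partial_3-\partial_{13}\partial_2+\partial_{23}\partial_1$. *)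

theory Defs
  imports Complex_Main
begin

text \<open>The ten variables of R = Sym(C^4) (x) Sym(Lambda^2 C^4).\<close>
datatype var = X1 | X2 | X3 | X4 | X12 | X13 | X14 | X23 | X24 | X34

text \<open>Monomials are exponent vectors (var is finite, so every function is finitely
supported).  A polynomial is a coefficient function with finite support.\<close>
type_synonym monomial = "var \<Rightarrow> nat"
type_synonym cpoly = "monomial \<Rightarrow> complex"

definition is_poly :: "cpoly \<Rightarrow> bool" where
  "is_poly P \<longleftrightarrow> finite {m. P m \<noteq> 0}"

definition pderiv_var :: "var \<Rightarrow> cpoly \<Rightarrow> cpoly" where
  "pderiv_var v P = (\<lambda>m. of_nat (m v + 1) * P (m(v := m v + 1)))"

definition D4 :: "cpoly \<Rightarrow> cpoly" where
  "D4 P = (\<lambda>m. pderiv_var X12 (pderiv_var X3 P) m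
              - pderiv_var X13 (pderiv_var X2 P) m
              + pderiv_var X23 (pderiv_var X1 P) m)"

definition indep_of :: "var \<Rightarrow> cpoly \<Rightarrow> bool" where
  "indep_of v P \<longleftrightarrow> (\<forall>m. P m \<noteq> 0 \<longrightarrow> m v = 0)"

definition xpair :: "nat \<Rightarrow> nat \<Rightarrow> var" where
  "xpair i j = (if (i, j) = (1, 2) then X12 else if (i, j) = (1, 3) then X13
     else if (i, j) = (1, 4) then X14 else if (i, j) = (2, 3) then X23
     else if (i, j) = (2, 4) then X24 else if (i, j) = (3, 4) then X34 else undefined)"

end

theory Submission
  imports Defs
begin

text \<open>Choose a term c d_a d_b of D4 = d12 d3 - d13 d2 + d23 d1 whose quadratic variable x_a is
not one of the (at most two) variables to be avoided; the linear variable x_b never is.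
Inverting c d_a d_b monomialwise gives Q1 with the same independence, and D4 Q1 - Q consists
of the two other terms applied to Q1.  These trade x_a x_b for x_a' x_b' with b' \<noteq> b, so the
error has strictly smaller degree in the linear variables other than x_b, and induction on that
degree produces the preimage.\<close>

lemma is_poly_zero: "is_poly (\<lambda>m. 0)"
  by (simp add: is_poly_def)

lemma is_poly_add: "is_poly P \<Longrightarrow> is_poly R \<Longrightarrow> is_poly (\<lambda>m. P m + R m)"
  unfolding is_poly_def by (rule finite_subset[of _ "{m. P m \<noteq> 0} \<union> {m. R m \<noteq> 0}"]) auto

lemma is_poly_diff: "is_poly P \<Longrightarrow> is_poly R \<Longrightarrow> is_poly (\<lambda>m. P m - R m)"
  unfolding is_poly_def by (rule finite_subset[of _ "{m. P m \<noteq> 0} \<union> {m. R m \<noteq> 0}"]) auto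

lemma is_poly_scale: "is_poly P \<Longrightarrow> is_poly (\<lambda>m. c * P m)"
  unfolding is_poly_def by (rule finite_subset[of _ "{m. P m \<noteq> 0}"]) auto

lemma is_poly_pderiv_var:
  assumes "is_poly P"
  shows "is_poly (pderiv_var v P)"
proof -
  have "{m. pderiv_var v P m \<noteq> 0} \<subseteq> (\<lambda>m. m(v := m v - 1)) ` {m. P m \<noteq> 0}"
  proof
    fix m assume "m \<in> {m. pderiv_var v P m \<noteq> 0}"
    then have "P (m(v := m v + 1)) \<noteq> 0" by (simp add: pderiv_var_def)
    moreover have "m = (m(v := m v + 1))(v := (m(v := m v + 1)) v - 1)" by simp
    ultimately show "m \<in> (\<lambda>m. m(v := m v - 1)) ` {m. P m \<noteq> 0}" by blast
  qed
  with assms show ?thesis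
    unfolding is_poly_def using finite_subset by blast
qed

lemma is_poly_D4: "is_poly P \<Longrightarrow> is_poly (D4 P)"
  unfolding D4_def by (intro is_poly_add is_poly_diff is_poly_pderiv_var)

lemma indep_of_zero: "indep_of v (\<lambda>m. 0)"
  by (simp add: indep_of_def)

lemma indep_of_add: "indep_of v P \<Longrightarrow> indep_of v R \<Longrightarrow> indep_of v (\<lambda>m. P m + R m)"
  unfolding indep_of_def by (metis add.right_neutral)

lemma indep_of_diff: "indep_of v P \<Longrightarrow> indep_of v R \<Longrightarrow> indep_of v (\<lambda>m. P m - R m)"
  unfolding indep_of_def by (metis diff_self)

lemma indep_of_scale: "indep_of v P \<Longrightarrow> indep_of v (\<lambda>m. c * P m)"
  unfolding indep_of_def by simp

lemma indep_of_pderiv_var: "indep_of u P \<Longrightarrow> indep_of u (pderiv_var v P)"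
  unfolding indep_of_def pderiv_var_def by (cases "u = v") fastforce+

lemma indep_of_D4: "indep_of v P \<Longrightarrow> indep_of v (D4 P)"
  unfolding D4_def by (intro indep_of_add indep_of_diff indep_of_pderiv_var)

lemma D4_diff: "D4 (\<lambda>m. P m - R m) = (\<lambda>m. D4 P m - D4 R m)"
  unfolding D4_def pderiv_var_def by (simp add: fun_eq_iff algebra_simps)

lemma pderiv_var_scale: "pderiv_var v (\<lambda>m. c * P m) = (\<lambda>m. c * pderiv_var v P m)"
  by (simp add: pderiv_var_def fun_eq_iff algebra_simps)

lemma pderiv_var_pderiv_var:
  assumes "a \<noteq> b"
  shows "pderiv_var a (pderiv_var b P) m
    = of_nat (m a + 1) * of_nat (m b + 1) * P (m(a := m a + 1, b := m b + 1))"
  using assms by (simp add: pderiv_var_def)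

definition D4_terms :: "(var \<times> var \<times> complex) set" where
  "D4_terms = {(X12, X3, 1), (X13, X2, -1), (X23, X1, 1)}"

lemma finite_D4_terms: "finite D4_terms"
  by (simp add: D4_terms_def)

lemma D4_eq_sum_terms:
  "D4 P m = (\<Sum>(a, b, c)\<in>D4_terms. c * pderiv_var a (pderiv_var b P) m)"
  by (simp add: D4_def D4_terms_def)

definition antideriv2 :: "var \<Rightarrow> var \<Rightarrow> cpoly \<Rightarrow> cpoly" where
  "antideriv2 a b Q = (\<lambda>m. if 0 < m a \<and> 0 < m b
     then Q (m(a := m a - 1, b := m b - 1)) / (of_nat (m a) * of_nat (m b)) else 0)"

lemma pderiv_var_antideriv2:
  assumes "a \<noteq> b"
  shows "pderiv_var a (pderiv_var b (antideriv2 a b Q)) m = Q m"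
proof -
  have "m(a := m a + 1, b := m b + 1, a := m a, b := m b) = m"
    using assms by (simp add: fun_eq_iff)
  with assms show ?thesis
    by (simp add: pderiv_var_pderiv_var antideriv2_def del: of_nat_Suc)
qed

lemma antideriv2_nonzero:
  assumes "antideriv2 a b Q m \<noteq> 0"
  shows "0 < m a" "0 < m b" "Q (m(a := m a - 1, b := m b - 1)) \<noteq> 0"
  using assms by (auto simp: antideriv2_def split: if_splits)

lemma is_poly_antideriv2:
  assumes "a \<noteq> b" "is_poly Q"
  shows "is_poly (antideriv2 a b Q)"
proof -
  let ?raise = "\<lambda>m. m(a := m a + 1, b := m b + 1)"
  have "{m. antideriv2 a b Q m \<noteq> 0} \<subseteq> ?raise ` {m. Q m \<noteq> 0}"
  proof
    fix m assume "m \<in> {m. antideriv2 a b Q m \<noteq> 0}"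
    then have "0 < m a" "0 < m b" "Q (m(a := m a - 1, b := m b - 1)) \<noteq> 0"
      using antideriv2_nonzero by blast+
    moreover from this have "m = ?raise (m(a := m a - 1, b := m b - 1))"
      using assms(1) by (auto simp: fun_eq_iff)
    ultimately show "m \<in> ?raise ` {m. Q m \<noteq> 0}" by blast
  qed
  with assms(2) show ?thesis
    unfolding is_poly_def using finite_subset by blast
qed

lemma indep_of_antideriv2: "indep_of v Q \<Longrightarrow> v \<noteq> a \<Longrightarrow> v \<noteq> b \<Longrightarrow> indep_of v (antideriv2 a b Q)"
  unfolding indep_of_def antideriv2_def by (auto split: if_splits)

lemma pderiv_var_antideriv2_nonzero:
  assumes "a' \<noteq> b'" "{a, b} \<inter> {a', b'} = {}"
    and "pderiv_var a' (pderiv_var b' (antideriv2 a b Q)) m \<noteq> 0"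
  shows "Q (m(a' := m a' + 1, b' := m b' + 1, a := m a - 1, b := m b - 1)) \<noteq> 0"
  using assms antideriv2_nonzero(3)[of a b Q "m(a' := m a' + 1, b' := m b' + 1)"]
  by (auto simp: pderiv_var_pderiv_var)

definition other_linear_degree :: "var \<Rightarrow> monomial \<Rightarrow> nat" where
  "other_linear_degree b m = (\<Sum>v\<in>{X1, X2, X3} - {b}. m v)"

lemma other_linear_degree_shift:
  assumes "b \<in> {X1, X2, X3}" "b' \<in> {X1, X2, X3}" "b \<noteq> b'"
    and "a \<notin> {X1, X2, X3}" "a' \<notin> {X1, X2, X3}"
  shows "other_linear_degree b (m(a' := m a' + 1, b' := m b' + 1, a := m a - 1, b := m b - 1))
    = Suc (other_linear_degree b m)"
  using assms by (auto simp: other_linear_degree_def insert_Diff_if)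

lemma D4_terms_shape:
  "(a, b, c) \<in> D4_terms \<Longrightarrow> a \<notin> {X1, X2, X3} \<and> b \<in> {X1, X2, X3} \<and> c * c = 1"
  by (auto simp: D4_terms_def)

lemma D4_terms_disjoint:
  "(a, b, c) \<in> D4_terms \<Longrightarrow> (a', b', c') \<in> D4_terms \<Longrightarrow> (a', b', c') \<noteq> (a, b, c)
    \<Longrightarrow> {a, b} \<inter> {a', b'} = {} \<and> b \<noteq> b'"
  by (auto simp: D4_terms_def)

lemma D4_antideriv2_error_degree:
  assumes in_terms: "(a, b, c) \<in> D4_terms"
    and bound: "\<forall>m. Q m \<noteq> 0 \<longrightarrow> other_linear_degree b m < Suc N"
    and error: "D4 (\<lambda>m. c * antideriv2 a b Q m) m \<noteq> Q m"
  shows "other_linear_degree b m < N"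
proof -
  let ?Q1 = "antideriv2 a b Q"
  let ?summand = "\<lambda>(a', b', c'). c' * pderiv_var a' (pderiv_var b' (\<lambda>m. c * ?Q1 m)) m"
  have shape: "a \<notin> {X1, X2, X3}" "b \<in> {X1, X2, X3}" "c * c = 1"
    using D4_terms_shape[OF in_terms] by auto
  from shape have "a \<noteq> b" by blast
  then have "?summand (a, b, c) = (c * c) * Q m"
    by (simp add: pderiv_var_scale pderiv_var_antideriv2)
  with shape(3) have "?summand (a, b, c) = Q m"
    by simp
  moreover have "D4 (\<lambda>m. c * ?Q1 m) m
      = ?summand (a, b, c) + (\<Sum>t\<in>D4_terms - {(a, b, c)}. ?summand t)"
    unfolding D4_eq_sum_terms using finite_D4_terms in_terms by (rule sum.remove)
  ultimately have "(\<Sum>t\<in>D4_terms - {(a, b, c)}. ?summand t) \<noteq> 0"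
    using error by simp
  then obtain t where t: "t \<in> D4_terms - {(a, b, c)}" "?summand t \<noteq> 0"
    by (meson sum.neutral)
  obtain a' b' c' where "t = (a', b', c')"
    using prod_cases3 by blast
  with t have other: "(a', b', c') \<in> D4_terms" "(a', b', c') \<noteq> (a, b, c)"
    and nonzero: "pderiv_var a' (pderiv_var b' ?Q1) m \<noteq> 0"
    by (auto simp: pderiv_var_scale)
  have disj: "{a, b} \<inter> {a', b'} = {}" "b \<noteq> b'"
    using D4_terms_disjoint[OF in_terms other] by auto
  have shape': "a' \<notin> {X1, X2, X3}" "b' \<in> {X1, X2, X3}" "a' \<noteq> b'"
    using D4_terms_shape[OF other(1)] by auto
  from nonzero have "Q (m(a' := m a' + 1, b' := m b' + 1, a := m a - 1, b := m b - 1)) \<noteq> 0"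
    by (rule pderiv_var_antideriv2_nonzero[OF shape'(3) disj(1)])
  with bound
  have "other_linear_degree b (m(a' := m a' + 1, b' := m b' + 1, a := m a - 1, b := m b - 1))
    < Suc N"
    by blast
  then show ?thesis
    using other_linear_degree_shift[OF shape(2) shape'(2) disj(2) shape(1) shape'(1)] by simp
qed

lemma D4_preimage_degree_bounded:
  assumes "(a, b, c) \<in> D4_terms" "a \<notin> S" "b \<notin> S"
  shows "is_poly Q \<Longrightarrow> \<forall>v\<in>S. indep_of v Q
    \<Longrightarrow> \<forall>m. Q m \<noteq> 0 \<longrightarrow> other_linear_degree b m < N
    \<Longrightarrow> \<exists>Qt. is_poly Qt \<and> (\<forall>v\<in>S. indep_of v Qt) \<and> D4 Qt = Q"
proof (induction N arbitrary: Q)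
  case 0
  then have "Q = (\<lambda>m. 0)" by auto
  moreover have "D4 (\<lambda>m. 0) = (\<lambda>m. 0)"
    using D4_diff[of "\<lambda>m. 0" "\<lambda>m. 0"] by simp
  ultimately show ?case
    using is_poly_zero indep_of_zero by blast
next
  case (Suc N)
  have "a \<noteq> b"
    using D4_terms_shape[OF assms(1)] by auto
  define Q1 where "Q1 = (\<lambda>m. c * antideriv2 a b Q m)"
  define E where "E = (\<lambda>m. D4 Q1 m - Q m)"
  have poly_Q1: "is_poly Q1" and indep_Q1: "\<forall>v\<in>S. indep_of v Q1"
    unfolding Q1_def using \<open>a \<noteq> b\<close> Suc.prems(1,2) assms(2,3)
    by (auto intro!: is_poly_scale is_poly_antideriv2 indep_of_scale indep_of_antideriv2)
  have "is_poly E" "\<forall>v\<in>S. indep_of v E"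
    unfolding E_def using poly_Q1 indep_Q1 Suc.prems(1,2)
    by (auto intro!: is_poly_diff is_poly_D4 indep_of_diff indep_of_D4)
  moreover have "\<forall>m. E m \<noteq> 0 \<longrightarrow> other_linear_degree b m < N"
    unfolding E_def Q1_def using D4_antideriv2_error_degree[OF assms(1) Suc.prems(3)] by simp
  ultimately obtain R where R: "is_poly R" "\<forall>v\<in>S. indep_of v R" "D4 R = E"
    using Suc.IH by blast
  have "D4 (\<lambda>m. Q1 m - R m) = Q"
    using R(3) by (simp add: D4_diff E_def)
  with poly_Q1 indep_Q1 R(1,2) show ?case
    by (blast intro: is_poly_diff indep_of_diff)
qed

lemma D4_preimage_indep_of:
  assumes "(a, b, c) \<in> D4_terms" "a \<notin> S" "b \<notin> S"
    and "is_poly Q" "\<forall>v\<in>S. indep_of v Q"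
  shows "\<exists>Qt. is_poly Qt \<and> (\<forall>v\<in>S. indep_of v Qt) \<and> D4 Qt = Q"
proof -
  have "finite (other_linear_degree b ` {m. Q m \<noteq> 0})"
    using assms(4) unfolding is_poly_def by simp
  then obtain N where "\<forall>m. Q m \<noteq> 0 \<longrightarrow> other_linear_degree b m < N"
    by (meson finite_nat_set_iff_bounded imageI mem_Collect_eq)
  with D4_preimage_degree_bounded[OF assms(1-3)] assms(4,5) show ?thesis
    by blast
qed

lemma D4_term_avoiding:
  assumes "u \<in> {X12, X13, X23}" "w \<in> {X12, X13, X23}"
  obtains a b c where "(a, b, c) \<in> D4_terms" "a \<notin> {u, w}" "b \<notin> {u, w}"
proof -
  consider "X12 \<notin> {u, w}" | "X13 \<notin> {u, w}" | "X23 \<notin> {u, w}"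
    using assms by auto
  then show ?thesis
    using that assms unfolding D4_terms_def by cases auto
qed

lemma D4_preimage_indep_of_two:
  assumes "u \<in> {X12, X13, X23}" "w \<in> {X12, X13, X23}"
    and "is_poly Q" "indep_of u Q" "indep_of w Q"
  shows "\<exists>Qt. is_poly Qt \<and> indep_of u Qt \<and> indep_of w Qt \<and> D4 Qt = Q"
proof -
  obtain a b c where "(a, b, c) \<in> D4_terms" "a \<notin> {u, w}" "b \<notin> {u, w}"
    using D4_term_avoiding[OF assms(1,2)] .
  from D4_preimage_indep_of[OF this] assms(3-5) show ?thesis
    by auto
qed

lemma xpair_mem:
  "i \<in> {1, 2, 3} \<Longrightarrow> j \<in> {1, 2, 3} \<Longrightarrow> i < j \<Longrightarrow> xpair i j \<in> {X12, X13, X23}"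
  by (auto simp: xpair_def)

theorem mainTheorem6:
  fixes i j h k :: nat
  assumes "i \<in> {1,2,3}" "j \<in> {1,2,3}" "h \<in> {1,2,3}" "k \<in> {1,2,3}"
    and "i < j" "h < k"
  shows "(\<forall>Q. is_poly Q \<and> indep_of (xpair i j) Q \<longrightarrow>
            (\<exists>Qt. is_poly Qt \<and> indep_of (xpair i j) Qt \<and> D4 Qt = Q))
       \<and> (\<forall>Q. is_poly Q \<and> indep_of (xpair i j) Q \<and> indep_of (xpair h k) Q \<longrightarrow>
            (\<exists>Qt. is_poly Qt \<and> indep_of (xpair i j) Qt \<and> indep_of (xpair h k) Qt
                  \<and> D4 Qt = Q))"
proof -
  have ij: "xpair i j \<in> {X12, X13, X23}" and hk: "xpair h k \<in> {X12, X13, X23}"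
    using xpair_mem assms by blast+
  show ?thesis
    using D4_preimage_indep_of_two[OF ij ij] D4_preimage_indep_of_two[OF ij hk] by blast
qed

end
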